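(* For every normal PO-dilator $W$ and every partial order $X$, the relation $\leq_{\mathcal T W(X)}$ is a partial order on $\mathcal T W(X)$.
   Context: A quasi embedding between partial orders $X,Y$ is a function $f$ with $f(x)\leq_Y f(y)\Rightarrow x\leq_X y$; an embedding also satisfies the converse. $\mathrm{PO}$ is the category of partial orders and quasi embeddings. $[X]^{<\omega}$ denotes the finite subsets of $X$, with $[f]^{<\omega}(a)=\{f(x)\mid x\in a\}$; subsets of partial orders are regarded as suborders and $\iota_a$ denotes an inclusion map. A PO-dilator is a functor $W:\mathrm{PO}\to\mathrm{PO}$ mapping embeddings to embeddings, with a natural transformation $\operatorname{supp}^W:W\Rightarrow[\cdot]^{<\omega}$ such that for every embedding $f:X\to Y$, $\operatorname{rng}(W(f))=\{\sigma\in W(Y)\mid\operatorname{supp}^W_Y(\sigma)\subseteq\operatorname{rng}(f)\}$. For finite $a,b\subseteq X$, $a\leq^{\mathrm{fin}}_X b$ iff every $x\in a$ has some $y\in b$ with $x\leq_X y$. $W$ is normal if $\sigma\leq_{W(X)}\tau$ implies $\operatorname{supp}^W_X(\sigma)\leq^{\mathrm{fin}}_X\operatorname{supp}^W_X(\tau)$. For a normal PO-dilator $W$ and partial order $X$, the set $\mathcal T W(X)$ and relation $\leq_{\mathcal T W(X)}$ are defined by simultaneous recursion. Terms: (i) $\overline x$ for each $x\in X$; (ii) for each finite $a\subseteq\mathcal T W(X)$ on which the restriction of $\leq_{\mathcal T W(X)}$ is a partial order, and each $\sigma\in W(a)$ with $\operatorname{supp}^W_a(\sigma)=a$, a term $\circ(a,\sigma)$.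 Relation: $s\leq_{\mathcal T W(X)}t$ iff (i') $s=\overline x$, $t=\overline y$, $x\leq_X y$; or (ii') $t=\circ(b,\tau)$ and $s\leq_{\mathcal T W(X)}t'$ for some $t'\in b$; or (iii') $s=\circ(a,\sigma)$, $t=\circ(b,\tau)$, the restriction of $\leq_{\mathcal T W(X)}$ to $a\cup b$ is a partial order, and $W(\iota_a)(\sigma)\leq_{W(a\cup b)}W(\iota_b)(\tau)$ for the inclusions $\iota_a:a\hookrightarrow a\cup b$, $\iota_b:b\hookrightarrow a\cup b$. (The recursion is along the length $l(\overline x)=0$, $l(\circ(a,\sigma))=1+\sum_{r\in a}2\,l(r)$.) *)

theory Defs
  imports Main "HOL-Library.FSet"
begin

text \<open>A partial order is represented by its relation r; its carrier is Field r
  (reflexivity makes every element of the carrier appear in r).\<close>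

definition po :: "'a rel \<Rightarrow> bool" where
  "po r \<longleftrightarrow> partial_order_on (Field r) r"

definition quasi_emb :: "'a rel \<Rightarrow> 'b rel \<Rightarrow> ('a \<Rightarrow> 'b) \<Rightarrow> bool" where
  "quasi_emb r s f \<longleftrightarrow> f ` Field r \<subseteq> Field s \<and>
     (\<forall>x\<in>Field r. \<forall>y\<in>Field r. (f x, f y) \<in> s \<longrightarrow> (x, y) \<in> r)"

definition emb :: "'a rel \<Rightarrow> 'b rel \<Rightarrow> ('a \<Rightarrow> 'b) \<Rightarrow> bool" where
  "emb r s f \<longleftrightarrow> f ` Field r \<subseteq> Field s \<and>
     (\<forall>x\<in>Field r. \<forall>y\<in>Field r. (f x, f y) \<in> s \<longleftrightarrow> (x, y) \<in> r)"

text \<open>A functor W on partial orders (with carriers in the type 'a) is given by its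
  object part Wo (the partial order W(X)), its morphism part Wm (Wm r s f is W(f) for a
  quasi embedding f from r to s) and the support transformation supp.\<close>

definition PO_dilator ::
  "('a rel \<Rightarrow> 'w rel) \<Rightarrow> ('a rel \<Rightarrow> 'a rel \<Rightarrow> ('a \<Rightarrow> 'a) \<Rightarrow> 'w \<Rightarrow> 'w)
    \<Rightarrow> ('a rel \<Rightarrow> 'w \<Rightarrow> 'a set) \<Rightarrow> bool" where
  "PO_dilator Wo Wm supp \<longleftrightarrow>
     \<comment> \<open>W maps partial orders to partial orders\<close>
     (\<forall>r. po r \<longrightarrow> po (Wo r)) \<and>
     \<comment> \<open>W maps quasi embeddings to quasi embeddings\<close>
     (\<forall>r s f. po r \<and> po s \<and> quasi_emb r s f \<longrightarrow> quasi_emb (Wo r) (Wo s) (Wm r s f)) \<and>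
     \<comment> \<open>W(f) only depends on f as a function on the carrier\<close>
     (\<forall>r s f g. po r \<and> po s \<and> quasi_emb r s f \<and> (\<forall>x\<in>Field r. f x = g x) \<longrightarrow>
        (\<forall>\<sigma>\<in>Field (Wo r). Wm r s f \<sigma> = Wm r s g \<sigma>)) \<and>
     \<comment> \<open>functoriality: identities\<close>
     (\<forall>r. po r \<longrightarrow> (\<forall>\<sigma>\<in>Field (Wo r). Wm r r id \<sigma> = \<sigma>)) \<and>
     \<comment> \<open>functoriality: composition\<close>
     (\<forall>r s t f g. po r \<and> po s \<and> po t \<and> quasi_emb r s f \<and> quasi_emb s t g \<longrightarrow>
        (\<forall>\<sigma>\<in>Field (Wo r). Wm r t (g \<circ> f) \<sigma> = Wm s t g (Wm r s f \<sigma>))) \<and>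
     \<comment> \<open>W maps embeddings to embeddings\<close>
     (\<forall>r s f. po r \<and> po s \<and> emb r s f \<longrightarrow> emb (Wo r) (Wo s) (Wm r s f)) \<and>
     \<comment> \<open>supp is a natural transformation W \<Rightarrow> [.]^{<omega}\<close>
     (\<forall>r. po r \<longrightarrow> (\<forall>\<sigma>\<in>Field (Wo r). finite (supp r \<sigma>) \<and> supp r \<sigma> \<subseteq> Field r)) \<and>
     (\<forall>r s f. po r \<and> po s \<and> quasi_emb r s f \<longrightarrow>
        (\<forall>\<sigma>\<in>Field (Wo r). supp s (Wm r s f \<sigma>) = f ` supp r \<sigma>)) \<and>
     \<comment> \<open>support condition\<close>
     (\<forall>r s f. po r \<and> po s \<and> emb r s f \<longrightarrow>
        Wm r s f ` Field (Wo r) = {\<sigma> \<in> Field (Wo s). supp s \<sigma> \<subseteq> f ` Field r})"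

definition le_fin :: "'a rel \<Rightarrow> 'a set \<Rightarrow> 'a set \<Rightarrow> bool" where
  "le_fin r a b \<longleftrightarrow> (\<forall>x\<in>a. \<exists>y\<in>b. (x, y) \<in> r)"

definition normal_PO_dilator ::
  "('a rel \<Rightarrow> 'w rel) \<Rightarrow> ('a rel \<Rightarrow> 'a rel \<Rightarrow> ('a \<Rightarrow> 'a) \<Rightarrow> 'w \<Rightarrow> 'w)
    \<Rightarrow> ('a rel \<Rightarrow> 'w \<Rightarrow> 'a set) \<Rightarrow> bool" where
  "normal_PO_dilator Wo Wm supp \<longleftrightarrow> PO_dilator Wo Wm supp \<and>
     (\<forall>r \<sigma> \<tau>. po r \<and> (\<sigma>, \<tau>) \<in> Wo r \<longrightarrow> le_fin r (supp r \<sigma>) (supp r \<tau>))"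

datatype ('x, 'w) tm = Bar 'x | Circ "('x, 'w) tm fset" 'w

lemma size_tm_fmember:
  "x |\<in>| a \<Longrightarrow> size x < Suc (\<Sum>x\<in>fset a. Suc (size x))"
proof -
  assume "x |\<in>| a"
  then have "Suc (size x) \<le> (\<Sum>x\<in>fset a. Suc (size x))"
    by (intro member_le_sum) auto
  then show ?thesis by simp
qed

function tlen :: "('x, 'w) tm \<Rightarrow> nat" where
  "tlen (Bar x) = 0"
| "tlen (Circ a \<sigma>) = 1 + (\<Sum>r\<in>fset a. 2 * tlen r)"
  by pat_completeness auto
termination
  by (relation "measure size") (auto intro: size_tm_fmember)

definition restr_rel :: "('a \<Rightarrow> 'a \<Rightarrow> bool) \<Rightarrow> 'a set \<Rightarrow> 'a rel" where
  "restr_rel le A = {(r, r'). r \<in> A \<and> r' \<in> A \<and> le r r'}"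

lemma restr_rel_cong[fundef_cong]:
  "A = B \<Longrightarrow> (\<And>r r'. r \<in> B \<Longrightarrow> r' \<in> B \<Longrightarrow> le r r' = le' r r') \<Longrightarrow>
    restr_rel le A = restr_rel le' B"
  unfolding restr_rel_def by auto

lemma tlen_mem_less:
  assumes "r \<in> fset a" shows "tlen r < tlen (Circ a \<sigma>)"
proof -
  have "2 * tlen r \<le> (\<Sum>r\<in>fset a. 2 * tlen r)"
    using assms by (intro member_le_sum) auto
  then show ?thesis by simp
qed

lemma tlen_mem2_less:
  assumes "r \<in> fset a" "r' \<in> fset a" shows "tlen r + tlen r' < tlen (Circ a \<sigma>)"
proof (cases "r = r'")
  case True
  have "2 * tlen r \<le> (\<Sum>r\<in>fset a. 2 * tlen r)"
    using assms by (intro member_le_sum) auto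
  then show ?thesis using True by simp
next
  case False
  have "(\<Sum>x\<in>{r, r'}. 2 * tlen x) \<le> (\<Sum>r\<in>fset a. 2 * tlen r)"
    using assms by (intro sum_mono2) auto
  then show ?thesis using False by simp
qed

lemma tlen_pair_less:
  assumes "r \<in> fset a \<union> fset b" "r' \<in> fset a \<union> fset b"
  shows "tlen r + tlen r' < tlen (Circ a \<sigma>) + tlen (Circ b \<tau>)"
  using assms tlen_mem_less[of r a \<sigma>] tlen_mem_less[of r b \<tau>]
      tlen_mem_less[of r' a \<sigma>] tlen_mem_less[of r' b \<tau>]
      tlen_mem2_less[of r a r' \<sigma>] tlen_mem2_less[of r b r' \<tau>]
  by auto

lemma Bex_fset_cong[fundef_cong]:
  "A = B \<Longrightarrow> (\<And>x. x \<in> fset B \<Longrightarrow> P x = Q x) \<Longrightarrow> (\<exists>x\<in>fset A. P x) = (\<exists>x\<in>fset B. Q x)"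
  by auto

text \<open>The relation of TW(X) (before restricting to the terms of TW(X)), by recursion
  along tlen s + tlen t, as in clauses (i'), (ii'), (iii'). The inclusions
  iota_a, iota_b into a \<union> b are represented by the identity function.\<close>

function twle ::
  "'x rel \<Rightarrow> (('x, 'w) tm rel \<Rightarrow> 'w rel)
    \<Rightarrow> (('x, 'w) tm rel \<Rightarrow> ('x, 'w) tm rel \<Rightarrow> (('x, 'w) tm \<Rightarrow> ('x, 'w) tm) \<Rightarrow> 'w \<Rightarrow> 'w)
    \<Rightarrow> ('x, 'w) tm \<Rightarrow> ('x, 'w) tm \<Rightarrow> bool" where
  "twle X Wo Wm (Bar x) (Bar y) \<longleftrightarrow> (x, y) \<in> X"
| "twle X Wo Wm (Circ a \<sigma>) (Bar y) \<longleftrightarrow> False"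
| "twle X Wo Wm (Bar x) (Circ b \<tau>) \<longleftrightarrow> (\<exists>t'\<in>fset b. twle X Wo Wm (Bar x) t')"
| "twle X Wo Wm (Circ a \<sigma>) (Circ b \<tau>) \<longleftrightarrow>
     (\<exists>t'\<in>fset b. twle X Wo Wm (Circ a \<sigma>) t') \<or>
     (partial_order_on (fset a \<union> fset b) (restr_rel (twle X Wo Wm) (fset a \<union> fset b)) \<and>
      (Wm (restr_rel (twle X Wo Wm) (fset a)) (restr_rel (twle X Wo Wm) (fset a \<union> fset b)) id \<sigma>,
       Wm (restr_rel (twle X Wo Wm) (fset b)) (restr_rel (twle X Wo Wm) (fset a \<union> fset b)) id \<tau>)
        \<in> Wo (restr_rel (twle X Wo Wm) (fset a \<union> fset b)))"
  by pat_completeness auto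
termination
  by (relation "measure (\<lambda>(X, Wo, Wm, s, t). tlen s + tlen t)")
     (auto simp del: tlen.simps intro: tlen_mem_less tlen_pair_less)

function twmem ::
  "'x rel \<Rightarrow> (('x, 'w) tm rel \<Rightarrow> 'w rel)
    \<Rightarrow> (('x, 'w) tm rel \<Rightarrow> ('x, 'w) tm rel \<Rightarrow> (('x, 'w) tm \<Rightarrow> ('x, 'w) tm) \<Rightarrow> 'w \<Rightarrow> 'w)
    \<Rightarrow> (('x, 'w) tm rel \<Rightarrow> 'w \<Rightarrow> ('x, 'w) tm set)
    \<Rightarrow> ('x, 'w) tm \<Rightarrow> bool" where
  "twmem X Wo Wm supp (Bar x) \<longleftrightarrow> x \<in> Field X"
| "twmem X Wo Wm supp (Circ a \<sigma>) \<longleftrightarrow>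
     (\<forall>r\<in>fset a. twmem X Wo Wm supp r) \<and>
     partial_order_on (fset a) (restr_rel (twle X Wo Wm) (fset a)) \<and>
     \<sigma> \<in> Field (Wo (restr_rel (twle X Wo Wm) (fset a))) \<and>
     supp (restr_rel (twle X Wo Wm) (fset a)) \<sigma> = fset a"
  by pat_completeness auto
termination
  by (relation "measure (\<lambda>(X, Wo, Wm, supp, s). tlen s)")
     (auto simp del: tlen.simps intro: tlen_mem_less)

definition TW where
  "TW X Wo Wm supp = {s. twmem X Wo Wm supp s}"

definition TW_le where
  "TW_le X Wo Wm supp = {(s, t). s \<in> TW X Wo Wm supp \<and> t \<in> TW X Wo Wm supp \<and> twle X Wo Wm s t}"

end

theory Submission
  imports Defs
begin

text \<open>Normality makes the order compatible with the height of terms: if \<open>\<circ>(a,\<sigma>)\<close> is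
  below \<open>\<circ>(b,\<tau>)\<close> by clause (iii'), then the supports satisfy \<open>a \<le>\<^sup>f\<^sup>i\<^sup>n b\<close>, so by
  induction the height cannot decrease, and clause (ii') strictly increases it. Hence two
  mutually comparable terms are related by clause (iii') in both directions, and antisymmetry
  of \<open>W(a \<union> b)\<close> together with the supports gives \<open>a = b\<close> and \<open>\<sigma> = \<tau>\<close>. Transitivity is
  proved by induction on the height of the largest term; in the essential case, where all
  comparisons use clause (iii'), the induction hypothesis makes \<open>a \<union> b \<union> c\<close> a partial order,
  and functoriality lets us compare \<open>\<sigma>\<close>, \<open>\<tau>\<close>, \<open>\<rho>\<close> inside \<open>W(a \<union> b \<union> c)\<close>, where
  embeddings transfer the comparisons back to \<open>W(a \<union> c)\<close>.\<close>

lemma restr_rel_iff [simp]: "(x, y) \<in> restr_rel le A \<longleftrightarrow> x \<in> A \<and> y \<in> A \<and> le x y"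
  by (simp add: restr_rel_def)

lemma Field_restr_rel_subset: "Field (restr_rel le A) \<subseteq> A"
  by (auto simp: Field_def)

lemma po_restr_rel:
  assumes "partial_order_on A (restr_rel le A)"
  shows "po (restr_rel le A)"
proof -
  have "Field (restr_rel le A) = A"
    using partial_order_onD(1)[OF assms] Field_restr_rel_subset[of le A]
    unfolding refl_on_def by (blast intro: FieldI1)
  then show ?thesis
    using assms by (simp add: po_def)
qed

lemma partial_order_on_restr_rel_subset:
  assumes "partial_order_on B (restr_rel le B)" and "A \<subseteq> B"
  shows "partial_order_on A (restr_rel le A)"
  using partial_order_onD[OF assms(1)] assms(2)
  unfolding partial_order_on_def preorder_on_def refl_on_def trans_def antisym_def
  by (simp add: subset_iff) blast

lemma emb_imp_quasi_emb: "emb r s f \<Longrightarrow> quasi_emb r s f"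
  by (simp add: emb_def quasi_emb_def)

lemma emb_id_restr_rel:
  assumes "A \<subseteq> B"
  shows "emb (restr_rel le A) (restr_rel le B) id"
  unfolding emb_def
proof (intro conjI ballI)
  have "restr_rel le A \<subseteq> restr_rel le B"
    using assms by auto
  then show "id ` Field (restr_rel le A) \<subseteq> Field (restr_rel le B)"
    using mono_Field by simp
  fix x y
  assume "x \<in> Field (restr_rel le A)" and "y \<in> Field (restr_rel le A)"
  then show "(id x, id y) \<in> restr_rel le B \<longleftrightarrow> (x, y) \<in> restr_rel le A"
    using Field_restr_rel_subset[of le A] assms by auto
qed

lemma Max_insert_image_mono:
  fixes f g :: "'a \<Rightarrow> 'b::linorder"
  assumes "finite A" and "finite B" and "\<forall>x\<in>A. \<exists>y\<in>B. f x \<le> g y"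
  shows "Max (insert c (f ` A)) \<le> Max (insert c (g ` B))"
proof (rule Max.boundedI)
  fix z
  assume "z \<in> insert c (f ` A)"
  then show "z \<le> Max (insert c (g ` B))"
    using assms by (auto intro: Max_ge_iff[THEN iffD2])
qed (use assms(1) in simp_all)

locale normal_dilator =
  fixes Wo :: "'a rel \<Rightarrow> 'w rel"
    and Wm :: "'a rel \<Rightarrow> 'a rel \<Rightarrow> ('a \<Rightarrow> 'a) \<Rightarrow> 'w \<Rightarrow> 'w"
    and supp :: "'a rel \<Rightarrow> 'w \<Rightarrow> 'a set"
  assumes normal: "normal_PO_dilator Wo Wm supp"
begin

lemma po_Wo: "po r \<Longrightarrow> po (Wo r)"
  using normal by (simp add: normal_PO_dilator_def PO_dilator_def)

lemma Wm_quasi_emb: "po r \<Longrightarrow> po s \<Longrightarrow> quasi_emb r s f \<Longrightarrow> quasi_emb (Wo r) (Wo s) (Wm r s f)"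
  using normal by (simp add: normal_PO_dilator_def PO_dilator_def)

lemma Wm_emb: "po r \<Longrightarrow> po s \<Longrightarrow> emb r s f \<Longrightarrow> emb (Wo r) (Wo s) (Wm r s f)"
  using normal by (simp add: normal_PO_dilator_def PO_dilator_def)

lemma Wm_id: "po r \<Longrightarrow> \<sigma> \<in> Field (Wo r) \<Longrightarrow> Wm r r id \<sigma> = \<sigma>"
  using normal by (simp add: normal_PO_dilator_def PO_dilator_def)

lemma Wm_comp:
  "po r \<Longrightarrow> po s \<Longrightarrow> po t \<Longrightarrow> quasi_emb r s f \<Longrightarrow> quasi_emb s t g \<Longrightarrow> \<sigma> \<in> Field (Wo r) \<Longrightarrow>
    Wm r t (g \<circ> f) \<sigma> = Wm s t g (Wm r s f \<sigma>)"
  using normal by (simp add: normal_PO_dilator_def PO_dilator_def)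

lemma supp_Wm:
  "po r \<Longrightarrow> po s \<Longrightarrow> quasi_emb r s f \<Longrightarrow> \<sigma> \<in> Field (Wo r) \<Longrightarrow> supp s (Wm r s f \<sigma>) = f ` supp r \<sigma>"
  using normal by (simp add: normal_PO_dilator_def PO_dilator_def)

lemma le_fin_supp: "po r \<Longrightarrow> (\<sigma>, \<tau>) \<in> Wo r \<Longrightarrow> le_fin r (supp r \<sigma>) (supp r \<tau>)"
  using normal by (simp add: normal_PO_dilator_def)

definition incl :: "('a \<Rightarrow> 'a \<Rightarrow> bool) \<Rightarrow> 'a set \<Rightarrow> 'a set \<Rightarrow> 'w \<Rightarrow> 'w" where
  "incl le A B = Wm (restr_rel le A) (restr_rel le B) id"

definition W_label :: "('a \<Rightarrow> 'a \<Rightarrow> bool) \<Rightarrow> 'a set \<Rightarrow> 'w \<Rightarrow> bool" where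
  "W_label le A \<sigma> \<longleftrightarrow> partial_order_on A (restr_rel le A) \<and>
     \<sigma> \<in> Field (Wo (restr_rel le A)) \<and> supp (restr_rel le A) \<sigma> = A"

definition W_le :: "('a \<Rightarrow> 'a \<Rightarrow> bool) \<Rightarrow> 'a set \<Rightarrow> 'w \<Rightarrow> 'a set \<Rightarrow> 'w \<Rightarrow> bool" where
  "W_le le A \<sigma> B \<tau> \<longleftrightarrow> partial_order_on (A \<union> B) (restr_rel le (A \<union> B)) \<and>
     (incl le A (A \<union> B) \<sigma>, incl le B (A \<union> B) \<tau>) \<in> Wo (restr_rel le (A \<union> B))"

context
  fixes le :: "'a \<Rightarrow> 'a \<Rightarrow> bool"
    and A B :: "'a set"
  assumes po_A: "partial_order_on A (restr_rel le A)"
    and po_B: "partial_order_on B (restr_rel le B)"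
    and subset: "A \<subseteq> B"
begin

lemma incl_Field:
  "\<sigma> \<in> Field (Wo (restr_rel le A)) \<Longrightarrow> incl le A B \<sigma> \<in> Field (Wo (restr_rel le B))"
  using Wm_quasi_emb[OF po_restr_rel[OF po_A] po_restr_rel[OF po_B]
      emb_imp_quasi_emb[OF emb_id_restr_rel[OF subset]]]
  unfolding quasi_emb_def incl_def by blast

lemma supp_incl:
  "\<sigma> \<in> Field (Wo (restr_rel le A)) \<Longrightarrow>
    supp (restr_rel le B) (incl le A B \<sigma>) = supp (restr_rel le A) \<sigma>"
  using supp_Wm[OF po_restr_rel[OF po_A] po_restr_rel[OF po_B]
      emb_imp_quasi_emb[OF emb_id_restr_rel[OF subset]]]
  unfolding incl_def by simp

lemma incl_le_incl_iff:
  "\<sigma> \<in> Field (Wo (restr_rel le A)) \<Longrightarrow> \<tau> \<in> Field (Wo (restr_rel le A)) \<Longrightarrow>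
    (incl le A B \<sigma>, incl le A B \<tau>) \<in> Wo (restr_rel le B) \<longleftrightarrow> (\<sigma>, \<tau>) \<in> Wo (restr_rel le A)"
  using Wm_emb[OF po_restr_rel[OF po_A] po_restr_rel[OF po_B] emb_id_restr_rel[OF subset]]
  unfolding emb_def incl_def by blast

lemma incl_incl:
  assumes "partial_order_on C (restr_rel le C)" and "B \<subseteq> C"
    and "\<sigma> \<in> Field (Wo (restr_rel le A))"
  shows "incl le B C (incl le A B \<sigma>) = incl le A C \<sigma>"
  using Wm_comp[OF po_restr_rel[OF po_A] po_restr_rel[OF po_B] po_restr_rel[OF assms(1)]
      emb_imp_quasi_emb[OF emb_id_restr_rel[OF subset]]
      emb_imp_quasi_emb[OF emb_id_restr_rel[OF assms(2)]] assms(3)]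
  unfolding incl_def by simp

end

lemma incl_self:
  "partial_order_on A (restr_rel le A) \<Longrightarrow> \<sigma> \<in> Field (Wo (restr_rel le A)) \<Longrightarrow> incl le A A \<sigma> = \<sigma>"
  unfolding incl_def using Wm_id po_restr_rel by blast

lemma W_le_iff_incl:
  assumes "W_label le A \<sigma>" and "W_label le B \<tau>"
    and po_D: "partial_order_on D (restr_rel le D)" and "A \<union> B \<subseteq> D"
  shows "W_le le A \<sigma> B \<tau> \<longleftrightarrow> (incl le A D \<sigma>, incl le B D \<tau>) \<in> Wo (restr_rel le D)"
proof -
  let ?U = "A \<union> B"
  have po_U: "partial_order_on ?U (restr_rel le ?U)"
    using partial_order_on_restr_rel_subset[OF po_D assms(4)] .
  have A: "partial_order_on A (restr_rel le A)" "\<sigma> \<in> Field (Wo (restr_rel le A))"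
    and B: "partial_order_on B (restr_rel le B)" "\<tau> \<in> Field (Wo (restr_rel le B))"
    using assms(1,2) by (simp_all add: W_label_def)
  have "incl le A D \<sigma> = incl le ?U D (incl le A ?U \<sigma>)"
    using incl_incl[OF A(1) po_U _ po_D assms(4) A(2)] by simp
  moreover have "incl le B D \<tau> = incl le ?U D (incl le B ?U \<tau>)"
    using incl_incl[OF B(1) po_U _ po_D assms(4) B(2)] by simp
  moreover have "incl le A ?U \<sigma> \<in> Field (Wo (restr_rel le ?U))"
    and "incl le B ?U \<tau> \<in> Field (Wo (restr_rel le ?U))"
    using incl_Field[OF A(1) po_U _ A(2)] incl_Field[OF B(1) po_U _ B(2)] by simp_all
  ultimately show ?thesis
    using incl_le_incl_iff[OF po_U po_D assms(4)] po_U by (simp add: W_le_def)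
qed

lemma W_le_le_fin:
  assumes "W_label le A \<sigma>" and "W_label le B \<tau>" and "W_le le A \<sigma> B \<tau>"
  shows "\<forall>x\<in>A. \<exists>y\<in>B. le x y"
proof -
  let ?U = "A \<union> B"
  have po_U: "partial_order_on ?U (restr_rel le ?U)"
    and le: "(incl le A ?U \<sigma>, incl le B ?U \<tau>) \<in> Wo (restr_rel le ?U)"
    using assms(3) by (simp_all add: W_le_def)
  have "supp (restr_rel le ?U) (incl le A ?U \<sigma>) = A"
    and "supp (restr_rel le ?U) (incl le B ?U \<tau>) = B"
    using assms(1,2) supp_incl[OF _ po_U, of A \<sigma>] supp_incl[OF _ po_U, of B \<tau>]
    by (simp_all add: W_label_def)
  then show ?thesis
    using le_fin_supp[OF po_restr_rel[OF po_U] le] by (simp add: le_fin_def)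
qed

lemma W_le_refl:
  assumes "W_label le A \<sigma>"
  shows "W_le le A \<sigma> A \<sigma>"
proof -
  have po_A: "partial_order_on A (restr_rel le A)" and \<sigma>: "\<sigma> \<in> Field (Wo (restr_rel le A))"
    using assms by (simp_all add: W_label_def)
  have "refl_on (Field (Wo (restr_rel le A))) (Wo (restr_rel le A))"
    using po_Wo[OF po_restr_rel[OF po_A]] partial_order_onD(1) unfolding po_def by blast
  then have "(\<sigma>, \<sigma>) \<in> Wo (restr_rel le A)"
    using \<sigma> by (simp add: refl_on_def)
  then show ?thesis
    using po_A incl_self[OF po_A \<sigma>] by (simp add: W_le_def)
qed

lemma W_le_antisym:
  assumes "W_label le A \<sigma>" and "W_label le B \<tau>"
    and "W_le le A \<sigma> B \<tau>" and "W_le le B \<tau> A \<sigma>"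
  shows "A = B \<and> \<sigma> = \<tau>"
proof -
  let ?U = "A \<union> B"
  have po_U: "partial_order_on ?U (restr_rel le ?U)"
    using assms(3) by (simp add: W_le_def)
  have "(incl le A ?U \<sigma>, incl le B ?U \<tau>) \<in> Wo (restr_rel le ?U)"
    and "(incl le B ?U \<tau>, incl le A ?U \<sigma>) \<in> Wo (restr_rel le ?U)"
    using W_le_iff_incl[OF assms(1,2) po_U] W_le_iff_incl[OF assms(2,1) po_U] assms(3,4)
    by auto
  then have eq: "incl le A ?U \<sigma> = incl le B ?U \<tau>"
    using po_Wo[OF po_restr_rel[OF po_U]] partial_order_onD(3) antisymD unfolding po_def by metis
  have "A = B"
    using arg_cong[OF eq, of "supp (restr_rel le ?U)"] assms(1,2)
      supp_incl[OF _ po_U, of A \<sigma>] supp_incl[OF _ po_U, of B \<tau>]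
    by (simp add: W_label_def)
  then show ?thesis
    using eq assms(1,2) incl_self[of A le] by (simp add: W_label_def)
qed

lemma W_le_trans:
  assumes "W_label le A \<sigma>" and "W_label le B \<tau>" and "W_label le C \<rho>"
    and po_D: "partial_order_on (A \<union> B \<union> C) (restr_rel le (A \<union> B \<union> C))"
    and "W_le le A \<sigma> B \<tau>" and "W_le le B \<tau> C \<rho>"
  shows "W_le le A \<sigma> C \<rho>"
proof -
  let ?D = "A \<union> B \<union> C"
  have "(incl le A ?D \<sigma>, incl le B ?D \<tau>) \<in> Wo (restr_rel le ?D)"
    and "(incl le B ?D \<tau>, incl le C ?D \<rho>) \<in> Wo (restr_rel le ?D)"
    using W_le_iff_incl[OF assms(1,2) po_D] W_le_iff_incl[OF assms(2,3) po_D] assms(5,6)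
    by auto
  then have "(incl le A ?D \<sigma>, incl le C ?D \<rho>) \<in> Wo (restr_rel le ?D)"
    using po_Wo[OF po_restr_rel[OF po_D]] partial_order_onD(2) transD unfolding po_def by metis
  then show ?thesis
    using W_le_iff_incl[OF assms(1,3) po_D] by auto
qed

end

function height :: "('x, 'w) tm \<Rightarrow> nat" where
  "height (Bar x) = 0"
| "height (Circ a \<sigma>) = Suc (Max (insert 0 (height ` fset a)))"
  by pat_completeness auto
termination
  by (relation "measure size") (auto intro: size_tm_fmember)

lemma height_less:
  assumes "r \<in> fset a"
  shows "height r < height (Circ a \<sigma>)"
proof -
  have "height r \<le> Max (insert 0 (height ` fset a))"
    using assms by (intro Max_ge) auto
  then show ?thesis
    by simp
qed

locale TW_order = normal_dilator Wo Wm supp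
  for Wo :: "('x, 'w) tm rel \<Rightarrow> 'w rel" and Wm and supp +
  fixes X :: "'x rel"
  assumes po_X: "po X"
begin

abbreviation le :: "('x, 'w) tm \<Rightarrow> ('x, 'w) tm \<Rightarrow> bool" where
  "le \<equiv> twle X Wo Wm"

abbreviation mem :: "('x, 'w) tm \<Rightarrow> bool" where
  "mem \<equiv> twmem X Wo Wm supp"

declare twmem.simps(2) [simp del] twle.simps(4) [simp del]

lemma twmem_Circ [simp]: "mem (Circ a \<sigma>) \<longleftrightarrow> (\<forall>r\<in>fset a. mem r) \<and> W_label le (fset a) \<sigma>"
  by (simp add: twmem.simps(2) W_label_def)

lemma twle_Circ_Circ [simp]:
  "le (Circ a \<sigma>) (Circ b \<tau>) \<longleftrightarrow> (\<exists>t\<in>fset b. le (Circ a \<sigma>) t) \<or> W_le le (fset a) \<sigma> (fset b) \<tau>"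
  by (simp add: twle.simps(4) W_le_def incl_def)

lemma twle_Circ_if_twle_mem: "u \<in> fset c \<Longrightarrow> le s u \<Longrightarrow> le s (Circ c \<rho>)"
  by (cases s) auto

lemma twle_CircE:
  assumes "le s (Circ b \<tau>)"
  obtains (below) t where "t \<in> fset b" and "le s t"
    | (W_le) a \<sigma> where "s = Circ a \<sigma>" and "W_le le (fset a) \<sigma> (fset b) \<tau>"
  using assms twle_Circ_Circ by (cases s) auto

lemma height_mono: "mem s \<Longrightarrow> mem t \<Longrightarrow> le s t \<Longrightarrow> height s \<le> height t"
proof (induction t arbitrary: s)
  case (Bar y)
  then show ?case
    by (cases s) auto
next
  case (Circ b \<tau>)
  from Circ.prems(3) show ?case
  proof (cases rule: twle_CircE)
    case (below t)
    then have "height s \<le> height t"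
      using Circ.IH Circ.prems(1,2) by auto
    also have "\<dots> < height (Circ b \<tau>)"
      using below(1) by (rule height_less)
    finally show ?thesis
      by simp
  next
    case (W_le a \<sigma>)
    have labels: "W_label le (fset a) \<sigma>" "W_label le (fset b) \<tau>"
      and subterms: "\<forall>r\<in>fset a. mem r" "\<forall>r\<in>fset b. mem r"
      using Circ.prems(1,2) W_le(1) by simp_all
    have "\<forall>x\<in>fset a. \<exists>y\<in>fset b. le x y"
      using W_le_le_fin[OF labels W_le(2)] .
    then have "\<forall>x\<in>fset a. \<exists>y\<in>fset b. height x \<le> height y"
      using Circ.IH subterms by blast
    then show ?thesis
      using W_le(1) Max_insert_image_mono[of "fset a" "fset b" height height 0] by simp
  qed
qed

lemma twle_refl: "mem s \<Longrightarrow> le s s"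
proof (cases s)
  case (Bar x)
  moreover assume "mem s"
  ultimately show ?thesis
    using po_X partial_order_onD(1) unfolding po_def refl_on_def by fastforce
next
  case (Circ a \<sigma>)
  moreover assume "mem s"
  ultimately show ?thesis
    using W_le_refl by simp
qed

text \<open>Comparisons via clause (ii') strictly increase the height, so between terms of equal
  height only clause (iii') can apply.\<close>

lemma W_le_if_twle_height_ge:
  assumes "mem (Circ a \<sigma>)" and "mem (Circ b \<tau>)" and "le (Circ a \<sigma>) (Circ b \<tau>)"
    and "height (Circ b \<tau>) \<le> height (Circ a \<sigma>)"
  shows "W_le le (fset a) \<sigma> (fset b) \<tau>"
  using assms(3)
proof (cases rule: twle_CircE)
  case (below t)
  have "mem t"
    using below(1) assms(2) by simp
  then have "height (Circ a \<sigma>) \<le> height t"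
    using height_mono assms(1) below(2) by blast
  moreover have "height t < height (Circ b \<tau>)"
    using below(1) by (rule height_less)
  ultimately show ?thesis
    using assms(4) by linarith
qed simp

lemma twle_antisym: "mem s \<Longrightarrow> mem t \<Longrightarrow> le s t \<Longrightarrow> le t s \<Longrightarrow> s = t"
proof (cases s; cases t)
  fix x y
  assume "s = Bar x" "t = Bar y" "le s t" "le t s"
  then show "s = t"
    using po_X partial_order_onD(3) antisymD unfolding po_def by fastforce
next
  fix a \<sigma> b \<tau>
  assume st: "s = Circ a \<sigma>" "t = Circ b \<tau>" and "mem s" "mem t" "le s t" "le t s"
  then have "W_le le (fset a) \<sigma> (fset b) \<tau>" "W_le le (fset b) \<tau> (fset a) \<sigma>"
    using height_mono W_le_if_twle_height_ge by (metis le_antisym)+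
  then have "fset a = fset b \<and> \<sigma> = \<tau>"
    using W_le_antisym[of le "fset a" \<sigma> "fset b" \<tau>] \<open>mem s\<close> \<open>mem t\<close> st by simp
  then show "s = t"
    using st by (simp add: fset_inject)
qed auto

lemma partial_order_on_twle:
  assumes mem: "\<And>s. s \<in> D \<Longrightarrow> mem s"
    and transitive: "\<And>s t u. s \<in> D \<Longrightarrow> t \<in> D \<Longrightarrow> u \<in> D \<Longrightarrow> le s t \<Longrightarrow> le t u \<Longrightarrow> le s u"
  shows "partial_order_on D (restr_rel le D)"
  unfolding partial_order_on_def preorder_on_def
proof (intro conjI)
  show "restr_rel le D \<subseteq> D \<times> D"
    by auto
  show "refl_on D (restr_rel le D)"
    using mem twle_refl by (simp add: refl_on_def)
  show "trans (restr_rel le D)"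
  proof (rule transI)
    fix s t u
    assume "(s, t) \<in> restr_rel le D" and "(t, u) \<in> restr_rel le D"
    then show "(s, u) \<in> restr_rel le D"
      by simp (blast intro: transitive)
  qed
  show "antisym (restr_rel le D)"
  proof (rule antisymI)
    fix s t
    assume "(s, t) \<in> restr_rel le D" and "(t, s) \<in> restr_rel le D"
    then show "s = t"
      using mem twle_antisym by simp
  qed
qed

lemma twle_Bar_trans: "le s t \<Longrightarrow> le t (Bar z) \<Longrightarrow> le s (Bar z)"
proof -
  assume le_st: "le s t" and le_tz: "le t (Bar z)"
  then obtain x y where st: "s = Bar x" "t = Bar y"
    by (cases s; cases t) auto
  have "trans X"
    using po_X partial_order_onD(2) unfolding po_def by blast
  moreover have "(x, y) \<in> X" and "(y, z) \<in> X"
    using le_st le_tz st by simp_all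
  ultimately have "(x, z) \<in> X"
    by (rule transD)
  then show ?thesis
    using st by simp
qed

lemma twle_Circ_if_W_le_W_le:
  assumes "mem (Circ a \<sigma>)" and "mem (Circ b \<tau>)" and "mem (Circ c \<rho>)"
    and "W_le le (fset a) \<sigma> (fset b) \<tau>" and "W_le le (fset b) \<tau> (fset c) \<rho>"
    and trans_D: "\<And>r1 r2 r3. r1 \<in> fset a \<union> fset b \<union> fset c \<Longrightarrow> r2 \<in> fset a \<union> fset b \<union> fset c \<Longrightarrow>
      r3 \<in> fset a \<union> fset b \<union> fset c \<Longrightarrow> le r1 r2 \<Longrightarrow> le r2 r3 \<Longrightarrow> le r1 r3"
  shows "le (Circ a \<sigma>) (Circ c \<rho>)"
proof -
  have "partial_order_on (fset a \<union> fset b \<union> fset c) (restr_rel le (fset a \<union> fset b \<union> fset c))"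
  proof (rule partial_order_on_twle)
    show "mem r" if "r \<in> fset a \<union> fset b \<union> fset c" for r
      using that assms(1-3) by auto
  qed (rule trans_D)
  then have "W_le le (fset a) \<sigma> (fset c) \<rho>"
    using W_le_trans[OF _ _ _ _ assms(4,5)] assms(1-3) by simp
  then show ?thesis
    by simp
qed

lemma height_less_of_twle_twle:
  assumes "mem (Circ a \<sigma>)" and "mem (Circ b \<tau>)" and "mem (Circ c \<rho>)"
    and "le (Circ a \<sigma>) (Circ b \<tau>)" and "le (Circ b \<tau>) (Circ c \<rho>)"
    and "r \<in> fset a \<union> fset b \<union> fset c"
  shows "height r < height (Circ c \<rho>)"
proof -
  have "height (Circ a \<sigma>) \<le> height (Circ b \<tau>)" and "height (Circ b \<tau>) \<le> height (Circ c \<rho>)"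
    using height_mono assms(1-5) by blast+
  then show ?thesis
    using assms(6) height_less[of r a \<sigma>] height_less[of r b \<tau>] height_less[of r c \<rho>]
    by (auto simp del: height.simps)
qed

lemma twle_trans: "mem s \<Longrightarrow> mem t \<Longrightarrow> mem u \<Longrightarrow> le s t \<Longrightarrow> le t u \<Longrightarrow> le s u"
proof (induction "height u" arbitrary: s t u rule: less_induct)
  case less
  show ?case
  proof (cases u)
    case (Bar z)
    then show ?thesis
      using twle_Bar_trans less.prems(4,5) by blast
  next
    case (Circ c \<rho>)
    have trans_below: "le s' u'"
      if "u' \<in> fset c" and "mem s'" and "mem t'" and "le s' t'" and "le t' u'" for s' t' u'
    proof -
      have "height u' < height u"
        using height_less[OF that(1)] Circ by simp
      moreover have "mem u'"
        using that(1) less.prems(3) Circ by simp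
      ultimately show ?thesis
        using less.hyps that(2-5) by presburger
    qed
    from less.prems(5)[unfolded Circ] show ?thesis
    proof (cases rule: twle_CircE)
      case (below u')
      then show ?thesis
        using trans_below less.prems(1,2,4) twle_Circ_if_twle_mem Circ by blast
    next
      case t_W_le: (W_le b \<tau>)
      from less.prems(4)[unfolded t_W_le(1)] show ?thesis
      proof (cases rule: twle_CircE)
        case (below t')
        have "\<forall>t'\<in>fset b. \<exists>u'\<in>fset c. le t' u'"
          using W_le_le_fin[OF _ _ t_W_le(2)] less.prems(2,3) t_W_le(1) Circ by simp
        then obtain u' where "u' \<in> fset c" and "le t' u'"
          using below(1) by blast
        moreover have "mem t'"
          using below(1) less.prems(2) t_W_le(1) by simp
        ultimately have "le s u'"
          using trans_below less.prems(1) below(2) by blast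
        then show ?thesis
          using \<open>u' \<in> fset c\<close> twle_Circ_if_twle_mem Circ by blast
      next
        case (W_le a \<sigma>)
        note mems = less.prems(1-3)[unfolded W_le(1) t_W_le(1) Circ]
        let ?D = "fset a \<union> fset b \<union> fset c"
        have height_D: "height r < height u" if "r \<in> ?D" for r
          using height_less_of_twle_twle[OF mems _ _ that] less.prems(4,5) W_le(1) t_W_le(1) Circ
          by simp
        have mem_D: "mem r" if "r \<in> ?D" for r
          using that mems by auto
        have "le r1 r3"
          if "r1 \<in> ?D" and "r2 \<in> ?D" and "r3 \<in> ?D" and "le r1 r2" and "le r2 r3" for r1 r2 r3
          using less.hyps[OF height_D[OF that(3)]] mem_D that by blast
        then show ?thesis
          using twle_Circ_if_W_le_W_le[OF mems W_le(2) t_W_le(2)] W_le(1) Circ by blast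
      qed
    qed
  qed
qed

end

theorem proposition2p6:
  fixes X :: "'x rel"
    and Wo :: "('x, 'w) tm rel \<Rightarrow> 'w rel"
    and Wm :: "('x, 'w) tm rel \<Rightarrow> ('x, 'w) tm rel \<Rightarrow> (('x, 'w) tm \<Rightarrow> ('x, 'w) tm) \<Rightarrow> 'w \<Rightarrow> 'w"
    and supp :: "('x, 'w) tm rel \<Rightarrow> 'w \<Rightarrow> ('x, 'w) tm set"
  assumes "normal_PO_dilator Wo Wm supp"
    and "po X"
  shows "partial_order_on (TW X Wo Wm supp) (TW_le X Wo Wm supp)"
proof -
  interpret TW_order Wo Wm supp X
    using assms by unfold_locales
  have "TW_le X Wo Wm supp = restr_rel le (TW X Wo Wm supp)"
    by (auto simp: TW_le_def restr_rel_def)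
  moreover have "partial_order_on (TW X Wo Wm supp) (restr_rel le (TW X Wo Wm supp))"
    using twle_trans unfolding TW_def by (intro partial_order_on_twle) blast+
  ultimately show ?thesis
    by simp
qed

end
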